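(* Let $N\ge2$ and consider $N\times N$ permutation matrices $\mathbf C=\sum_{j,k=0}^{N-1}c_{jk}|j\rangle\langle k|$. Consider the decision problem of determining whether $\langle0|\mathbf C|0\rangle=1$ or $\langle0|\mathbf C|0\rangle=0$. (i) Given oracle access to a block-encoding of $\mathbf C$, there is a quantum algorithm that solves this problem with probability $1$ using one query. (ii) Given instead oracle access to an (arbitrary, adversarially chosen) unitary $U_{\mathbf C}$ satisfying $U_{\mathbf C}|0\rangle=|C\rangle\rangle/\||C\rangle\rangle\|=\frac1{\sqrt N}\sum_{j,k}c_{jk}|j,k\rangle$, together with its inverse and controlled versions, any quantum algorithm that solves the problem with probability at least $2/3$ on every instance requires $\Omega(\sqrt N)$ queries.
   Context: Vectorization: for ${\bf F}=\sum_{j,k}f_{jk}|j\rangle\langle k|$, $|F\rangle\rangle:=\sum_{j,k}f_{jk}|j,k\rangle$. A block-encoding of a matrix ${\bf M}\in\mathbb C^{N\times N}$ with $\|{\bf M}\|\le\alpha$ is a unitary $U$ acting on $\mathbb C^N\otimes\mathbb C^{d}$ (ancilla dimension $d\ge1$) with $(\mathbb 1_N\otimes\langle0|)U(\mathbb 1_N\otimes|0\rangle)={\bf M}/\alpha$; here $\alpha=1$. Query counts include queries to inverses and controlled versions of the oracle. *)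

theory Defs
  imports "Jordan_Normal_Form.Schur_Decomposition" "HOL-Combinatorics.Permutations"
begin

(* Kronecker (tensor) product.  Basis convention: |j,k> has index j * dim B + k. *)
definition kron :: "complex mat \<Rightarrow> complex mat \<Rightarrow> complex mat" where
  "kron A B = mat (dim_row A * dim_row B) (dim_col A * dim_col B)
     (\<lambda>(i,j). A $$ (i div dim_row B, j div dim_col B) * B $$ (i mod dim_row B, j mod dim_col B))"

definition unitary_mat :: "nat \<Rightarrow> complex mat \<Rightarrow> bool" where
  "unitary_mat n U \<longleftrightarrow> U \<in> carrier_mat n n \<and> U * mat_adjoint U = 1\<^sub>m n \<and> mat_adjoint U * U = 1\<^sub>m n"

definition perm_matrix :: "nat \<Rightarrow> complex mat \<Rightarrow> bool" where
  "perm_matrix N C \<longleftrightarrow> C \<in> carrier_mat N N \<and>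
     (\<exists>\<sigma>. \<sigma> permutes {..<N} \<and> (\<forall>j<N. \<forall>k<N. C $$ (j,k) = (if j = \<sigma> k then 1 else 0)))"

(* Block-encoding with alpha = 1 and ancilla dimension d: U acts on C^N (x) C^d,
   (1_N (x) <0|) U (1_N (x) |0>) = M. *)
definition block_encoding :: "nat \<Rightarrow> nat \<Rightarrow> complex mat \<Rightarrow> complex mat \<Rightarrow> bool" where
  "block_encoding N d M U \<longleftrightarrow> d \<ge> 1 \<and> unitary_mat (N * d) U \<and>
     (\<forall>j<N. \<forall>k<N. U $$ (j * d, k * d) = M $$ (j, k))"

definition vectorize :: "nat \<Rightarrow> complex mat \<Rightarrow> complex vec" where
  "vectorize N F = vec (N * N) (\<lambda>i. F $$ (i div N, i mod N))"

definition vec_norm2 :: "complex vec \<Rightarrow> real" where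
  "vec_norm2 v = sqrt (\<Sum>i<dim_vec v. (cmod (v $ i))\<^sup>2)"

definition state_prep_oracle :: "nat \<Rightarrow> complex mat \<Rightarrow> complex mat \<Rightarrow> bool" where
  "state_prep_oracle N C U \<longleftrightarrow> unitary_mat (N * N) U \<and>
     U *\<^sub>v unit_vec (N * N) 0 = (1 / complex_of_real (vec_norm2 (vectorize N C))) \<cdot>\<^sub>v vectorize N C"

(* The algorithm's state space is
   C^2 (control qubit) (x) C^n (oracle register) (x) C^w (workspace), of dimension 2*n*w.
   A query is specified by (controlled?, inverse?); it applies
     plain:      1_2 (x) O' (x) 1_w
     controlled: |0><0| (x) 1_n (x) 1_w  +  |1><1| (x) O' (x) 1_w
   where O' = O or O' = O^dagger.  Between queries arbitrary (oracle-independent)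
   unitaries are applied; the algorithm starts in |0>, and finally measures in the
   computational basis and outputs 1 iff the outcome lies in the set Acc. *)

record qalg =
  work_dim :: nat
  init_unitary :: "complex mat"
  steps :: "((bool \<times> bool) \<times> complex mat) list"
  accept_set :: "nat set"

definition proj0 :: "complex mat" where "proj0 = mat 2 2 (\<lambda>(i,j). if i = 0 \<and> j = 0 then 1 else 0)"
definition proj1 :: "complex mat" where "proj1 = mat 2 2 (\<lambda>(i,j). if i = 1 \<and> j = 1 then 1 else 0)"

definition query_op :: "nat \<Rightarrow> nat \<Rightarrow> complex mat \<Rightarrow> bool \<times> bool \<Rightarrow> complex mat" where
  "query_op n w Orc q = (let Orc' = (if snd q then mat_adjoint Orc else Orc) in
     if fst q then kron proj0 (1\<^sub>m (n * w)) + kron proj1 (kron Orc' (1\<^sub>m w))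
     else kron (1\<^sub>m 2) (kron Orc' (1\<^sub>m w)))"

definition alg_dim :: "nat \<Rightarrow> qalg \<Rightarrow> nat" where
  "alg_dim n A = 2 * n * work_dim A"

definition wf_qalg :: "nat \<Rightarrow> qalg \<Rightarrow> bool" where
  "wf_qalg n A \<longleftrightarrow> work_dim A \<ge> 1 \<and> unitary_mat (alg_dim n A) (init_unitary A) \<and>
     (\<forall>s \<in> set (steps A). unitary_mat (alg_dim n A) (snd s))"

definition num_queries :: "qalg \<Rightarrow> nat" where
  "num_queries A = length (steps A)"

definition final_state :: "nat \<Rightarrow> qalg \<Rightarrow> complex mat \<Rightarrow> complex vec" where
  "final_state n A Orc =
     foldl (\<lambda>\<psi> (q, V). V *\<^sub>v (query_op n (work_dim A) Orc q *\<^sub>v \<psi>))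
       (init_unitary A *\<^sub>v unit_vec (alg_dim n A) 0) (steps A)"

definition prob_output1 :: "nat \<Rightarrow> qalg \<Rightarrow> complex mat \<Rightarrow> real" where
  "prob_output1 n A Orc = (\<Sum>i \<in> accept_set A \<inter> {..<alg_dim n A}. (cmod (final_state n A Orc $ i))\<^sup>2)"

definition success_prob :: "nat \<Rightarrow> qalg \<Rightarrow> complex mat \<Rightarrow> complex mat \<Rightarrow> real" where
  "success_prob n A C Orc =
     (if C $$ (0,0) = 1 then prob_output1 n A Orc else 1 - prob_output1 n A Orc)"

end

theory Submission
  imports Defs "HOL-Analysis.L2_Norm"
begin

(* Part (i): a single plain query to the block-encoding U, applied to |0>, leaves the amplitude
   <0|U|0> = <0|C|0>, which is 0 or 1, on the basis state |0>; accepting exactly on outcome 0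
   decides the problem with certainty.

   Part (ii): the instances C = 1 and C = the transposition (0 1) have normalised vectorisations
   v1, v0 at distance 2/sqrt N.  The Householder reflections exchanging |0> with v1, respectively
   v0, are admissible self-adjoint oracles differing by at most 10/sqrt N in operator norm.  By
   the hybrid argument each query, controlled or inverted or not, moves the final state by at most
   that much, so T queries change the acceptance probability by at most 20 T/sqrt N, whereas a
   correct algorithm separates the two instances by 1/3.  Hence T >= sqrt N / 60. *)

lemma vec_norm2_eq_L2_set: "vec_norm2 x = L2_set (\<lambda>i. cmod (x $ i)) {..<dim_vec x}"
  unfolding vec_norm2_def L2_set_def by simp

lemma vec_norm2_nonneg [simp]: "0 \<le> vec_norm2 x"
  by (simp add: vec_norm2_eq_L2_set)

lemma vec_norm2_power2: "(vec_norm2 x)\<^sup>2 = (\<Sum>i<dim_vec x. (cmod (x $ i))\<^sup>2)"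
  unfolding vec_norm2_def by (simp add: sum_nonneg)

lemma vec_norm2_power2_complex:
  "complex_of_real ((vec_norm2 x)\<^sup>2) = (\<Sum>i<dim_vec x. x $ i * cnj (x $ i))"
  unfolding vec_norm2_power2 of_real_sum by (intro sum.cong refl) (rule complex_norm_square)

lemma vec_norm2_add_le:
  assumes "x \<in> carrier_vec n" "y \<in> carrier_vec n"
  shows "vec_norm2 (x + y) \<le> vec_norm2 x + vec_norm2 y"
proof -
  have "vec_norm2 (x + y) = L2_set (\<lambda>i. cmod ((x + y) $ i)) {..<n}"
    using assms by (simp add: vec_norm2_eq_L2_set)
  also have "\<dots> \<le> L2_set (\<lambda>i. cmod (x $ i) + cmod (y $ i)) {..<n}"
    using assms by (intro L2_set_mono) (auto intro: norm_triangle_ineq)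
  also have "\<dots> \<le> vec_norm2 x + vec_norm2 y"
    using assms unfolding vec_norm2_eq_L2_set by (simp add: L2_set_triangle_ineq)
  finally show ?thesis .
qed

lemma vec_norm2_triangle:
  assumes "x \<in> carrier_vec n" "y \<in> carrier_vec n" "z \<in> carrier_vec n"
  shows "vec_norm2 (x - z) \<le> vec_norm2 (x - y) + vec_norm2 (y - z)"
proof -
  have "x - z = (x - y) + (y - z)" using assms by auto
  then show ?thesis using vec_norm2_add_le[of "x - y" n "y - z"] assms by auto
qed

lemma vec_norm2_smult: "vec_norm2 (c \<cdot>\<^sub>v x) = cmod c * vec_norm2 x"
proof -
  have "vec_norm2 (c \<cdot>\<^sub>v x) = L2_set (\<lambda>i. cmod c * cmod (x $ i)) {..<dim_vec x}"
    unfolding vec_norm2_eq_L2_set by (intro L2_set_cong) (auto simp: norm_mult)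
  then show ?thesis by (simp add: L2_set_right_distrib vec_norm2_eq_L2_set)
qed

lemma vec_norm2_diff_self [simp]: "vec_norm2 (v - v) = 0"
  unfolding vec_norm2_eq_L2_set by (intro L2_set_0') auto

lemma vec_norm2_unit_vec:
  assumes "i < n"
  shows "vec_norm2 (unit_vec n i) = 1"
proof -
  have "(\<Sum>j<n. (cmod (unit_vec n i $ j))\<^sup>2) = (\<Sum>j<n. if j = i then 1 else 0)"
    by (intro sum.cong) (auto simp: unit_vec_def)
  then show ?thesis using assms unfolding vec_norm2_def by simp
qed

lemma cmod_inner_le_vec_norm2:
  assumes "u \<in> carrier_vec n" "z \<in> carrier_vec n"
  shows "cmod (\<Sum>j<n. cnj (u $ j) * z $ j) \<le> vec_norm2 u * vec_norm2 z"
proof -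
  have "cmod (\<Sum>j<n. cnj (u $ j) * z $ j) \<le> (\<Sum>j<n. \<bar>cmod (u $ j)\<bar> * \<bar>cmod (z $ j)\<bar>)"
    by (rule order_trans[OF norm_sum]) (simp add: norm_mult)
  also have "\<dots> \<le> L2_set (\<lambda>j. cmod (u $ j)) {..<n} * L2_set (\<lambda>j. cmod (z $ j)) {..<n}"
    by (rule L2_set_mult_ineq)
  finally show ?thesis using assms by (simp add: vec_norm2_eq_L2_set)
qed

lemma sum_cmod_power2_diff_le:
  assumes a: "a \<in> carrier_vec n" and b: "b \<in> carrier_vec n"
    and na: "vec_norm2 a = 1" and nb: "vec_norm2 b = 1"
  shows "(\<Sum>i\<in>S \<inter> {..<n}. (cmod (a $ i))\<^sup>2) - (\<Sum>i\<in>S \<inter> {..<n}. (cmod (b $ i))\<^sup>2)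
           \<le> 2 * vec_norm2 (a - b)"
proof -
  let ?d = "\<lambda>i. cmod ((a - b) $ i)" and ?s = "\<lambda>i. cmod (a $ i) + cmod (b $ i)"
  have "(\<Sum>i\<in>S \<inter> {..<n}. (cmod (a $ i))\<^sup>2) - (\<Sum>i\<in>S \<inter> {..<n}. (cmod (b $ i))\<^sup>2)
      = (\<Sum>i\<in>S \<inter> {..<n}. (cmod (a $ i) - cmod (b $ i)) * ?s i)"
    by (simp add: sum_subtractf power2_eq_square algebra_simps)
  also have "\<dots> \<le> (\<Sum>i\<in>S \<inter> {..<n}. ?d i * ?s i)"
  proof (rule sum_mono)
    fix i assume "i \<in> S \<inter> {..<n}"
    then have "cmod (a $ i) - cmod (b $ i) \<le> ?d i"
      using b by (auto intro: order_trans[OF abs_ge_self norm_triangle_ineq3])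
    then show "(cmod (a $ i) - cmod (b $ i)) * ?s i \<le> ?d i * ?s i"
      by (intro mult_right_mono) auto
  qed
  also have "\<dots> \<le> (\<Sum>i<n. \<bar>?d i\<bar> * \<bar>?s i\<bar>)"
    by (simp add: sum_mono2)
  also have "\<dots> \<le> L2_set ?d {..<n} * L2_set ?s {..<n}"
    by (rule L2_set_mult_ineq)
  also have "\<dots> \<le> L2_set ?d {..<n} * (vec_norm2 a + vec_norm2 b)"
    using a b by (intro mult_left_mono) (auto simp: vec_norm2_eq_L2_set L2_set_triangle_ineq)
  also have "\<dots> = 2 * vec_norm2 (a - b)"
    using b na nb by (simp add: vec_norm2_eq_L2_set)
  finally show ?thesis .
qed

lemma sum_lessThan_mult:
  fixes m n :: nat
  shows "(\<Sum>i<m * n. f i) = (\<Sum>c<m. \<Sum>l<n. f (c * n + l))"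
proof -
  have "(\<Sum>i<m * n. f i) = (\<Sum>c<m. sum f {c * n..<c * n + n})"
    using sum.nat_group[of f n m] by simp
  also have "\<dots> = (\<Sum>c<m. \<Sum>l<n. f (c * n + l))"
  proof (rule sum.cong[OF refl])
    fix c
    show "sum f {c * n..<c * n + n} = (\<Sum>l<n. f (c * n + l))"
      using sum.shift_bounds_nat_ivl[of f 0 "c * n" n] by (simp add: atLeast0LessThan add.commute)
  qed
  finally show ?thesis .
qed

lemma mult_add_less_mult:
  fixes c m l n :: nat
  assumes "c < m" "l < n"
  shows "c * n + l < m * n"
proof -
  have "c * n + l < Suc c * n" using assms by simp
  also have "\<dots> \<le> m * n" using assms by (intro mult_le_mono1) simp
  finally show ?thesis .
qed

lemma mult_mat_vec_index_sum:
  "U \<in> carrier_mat n m \<Longrightarrow> x \<in> carrier_vec m \<Longrightarrow> i < n \<Longrightarrow>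
     (U *\<^sub>v x) $ i = (\<Sum>j<m. U $$ (i, j) * x $ j)"
  by (auto simp: scalar_prod_def atLeast0LessThan intro!: sum.cong)

lemma mat_adjoint_carrier: "U \<in> carrier_mat n m \<Longrightarrow> mat_adjoint U \<in> carrier_mat m n"
  unfolding mat_adjoint_def by auto

lemma mat_adjoint_index:
  "U \<in> carrier_mat n m \<Longrightarrow> i < m \<Longrightarrow> j < n \<Longrightarrow> mat_adjoint U $$ (i, j) = cnj (U $$ (j, i))"
  unfolding mat_adjoint_def by (auto simp: mat_of_rows_index)

lemma mat_adjoint_one: "mat_adjoint (1\<^sub>m n) = (1\<^sub>m n :: complex mat)"
proof -
  have "mat_adjoint (1\<^sub>m n :: complex mat) \<in> carrier_mat n n"
    by (rule mat_adjoint_carrier) simp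
  then show ?thesis by (intro eq_matI) (auto simp: mat_adjoint_index[of _ n n])
qed

lemma unitary_mat_one: "unitary_mat n (1\<^sub>m n)"
  unfolding unitary_mat_def mat_adjoint_one by simp

lemma unitary_mat_carrier: "unitary_mat n U \<Longrightarrow> U \<in> carrier_mat n n"
  unfolding unitary_mat_def by simp

lemma unitary_mat_vec_norm2:
  assumes U: "unitary_mat n U" and x: "x \<in> carrier_vec n"
  shows "vec_norm2 (U *\<^sub>v x) = vec_norm2 x"
proof -
  have Uc: "U \<in> carrier_mat n n" using U by (rule unitary_mat_carrier)
  have orth: "(\<Sum>i<n. cnj (U $$ (i, k)) * U $$ (i, j)) = (if k = j then 1 else 0)"
    if "k < n" "j < n" for k j
  proof -
    have "(mat_adjoint U * U) $$ (k, j) = (\<Sum>i<n. cnj (U $$ (i, k)) * U $$ (i, j))"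
      using Uc that mat_adjoint_carrier[OF Uc]
      by (auto simp: scalar_prod_def atLeast0LessThan mat_adjoint_index intro!: sum.cong)
    then show ?thesis using U that unfolding unitary_mat_def by auto
  qed
  have "complex_of_real ((vec_norm2 (U *\<^sub>v x))\<^sup>2)
      = (\<Sum>i<n. (\<Sum>j<n. U $$ (i, j) * x $ j) * cnj (\<Sum>k<n. U $$ (i, k) * x $ k))"
    unfolding vec_norm2_power2_complex using Uc x
    by (intro sum.cong) (auto simp: mult_mat_vec_index_sum[OF Uc x] simp del: index_mult_mat_vec)
  also have "\<dots> = (\<Sum>i<n. \<Sum>k<n. \<Sum>j<n. x $ j * cnj (x $ k) * (cnj (U $$ (i, k)) * U $$ (i, j)))"
    by (simp add: cnj_sum sum_product sum_distrib_left sum_distrib_right mult_ac)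
  also have "\<dots> = (\<Sum>j<n. \<Sum>k<n. \<Sum>i<n. x $ j * cnj (x $ k) * (cnj (U $$ (i, k)) * U $$ (i, j)))"
    by (subst sum.swap, subst (2) sum.swap, subst sum.swap) (rule refl)
  also have "\<dots> = (\<Sum>j<n. \<Sum>k<n. x $ j * cnj (x $ k) * (\<Sum>i<n. cnj (U $$ (i, k)) * U $$ (i, j)))"
    by (simp add: sum_distrib_left)
  also have "\<dots> = (\<Sum>j<n. x $ j * cnj (x $ j))"
    by (simp add: orth if_distrib cong: if_cong)
  also have "\<dots> = complex_of_real ((vec_norm2 x)\<^sup>2)"
    unfolding vec_norm2_power2_complex using x by simp
  finally have "(vec_norm2 (U *\<^sub>v x))\<^sup>2 = (vec_norm2 x)\<^sup>2"
    using of_real_eq_iff by blast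
  then show ?thesis by (simp add: power2_eq_iff_nonneg)
qed

lemma kron_carrier_mat:
  "A \<in> carrier_mat a a \<Longrightarrow> B \<in> carrier_mat b b \<Longrightarrow> kron A B \<in> carrier_mat (a * b) (a * b)"
  unfolding kron_def by auto

section \<open>Tensor blocks and the query operator\<close>

text \<open>For a vector on \<open>\<complex>\<^sup>m \<otimes> \<complex>\<^sup>n\<close> (index \<open>c * n + l\<close>), a block fixes the
  first tensor index \<open>c\<close> and a slice fixes the second one \<open>l\<close>.\<close>

definition vec_block :: "nat \<Rightarrow> 'a vec \<Rightarrow> nat \<Rightarrow> 'a vec" where
  "vec_block n x c = vec n (\<lambda>l. x $ (c * n + l))"

definition vec_slice :: "nat \<Rightarrow> nat \<Rightarrow> 'a vec \<Rightarrow> nat \<Rightarrow> 'a vec" where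
  "vec_slice n w x l = vec n (\<lambda>a. x $ (a * w + l))"

lemma vec_block_carrier [simp]: "vec_block n x c \<in> carrier_vec n"
  unfolding vec_block_def by simp

lemma vec_slice_carrier [simp]: "vec_slice n w x l \<in> carrier_vec n"
  unfolding vec_slice_def by simp

lemma dim_vec_block [simp]: "dim_vec (vec_block n x c) = n"
  unfolding vec_block_def by simp

lemma vec_norm2_power2_blocks:
  assumes "x \<in> carrier_vec (m * n)"
  shows "(vec_norm2 x)\<^sup>2 = (\<Sum>c<m. (vec_norm2 (vec_block n x c))\<^sup>2)"
  using assms unfolding vec_norm2_power2 vec_block_def by (simp add: sum_lessThan_mult[of _ m n])

lemma vec_norm2_power2_slices:
  assumes "x \<in> carrier_vec (n * w)"
  shows "(vec_norm2 x)\<^sup>2 = (\<Sum>l<w. (vec_norm2 (vec_slice n w x l))\<^sup>2)"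
  using assms unfolding vec_norm2_power2 vec_slice_def
  by (simp add: sum_lessThan_mult[of _ n w] sum.swap[of _ "{..<n}"])

lemma vec_block_add:
  "x \<in> carrier_vec (m * n) \<Longrightarrow> y \<in> carrier_vec (m * n) \<Longrightarrow> c < m \<Longrightarrow>
     vec_block n (x + y) c = vec_block n x c + vec_block n y c"
  unfolding vec_block_def by (intro eq_vecI) (use mult_add_less_mult[of c m _ n] in auto)

lemma vec_block_minus:
  "x \<in> carrier_vec (m * n) \<Longrightarrow> y \<in> carrier_vec (m * n) \<Longrightarrow> c < m \<Longrightarrow>
     vec_block n (x - y) c = vec_block n x c - vec_block n y c"
  unfolding vec_block_def by (intro eq_vecI) (use mult_add_less_mult[of c m _ n] in auto)

lemma vec_slice_minus:
  "x \<in> carrier_vec (n * w) \<Longrightarrow> y \<in> carrier_vec (n * w) \<Longrightarrow> l < w \<Longrightarrow>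
     vec_slice n w (x - y) l = vec_slice n w x l - vec_slice n w y l"
  unfolding vec_slice_def by (intro eq_vecI) (use mult_add_less_mult[of _ n l w] in auto)

lemma vec_block_kron_diagonal:
  assumes P: "P \<in> carrier_mat m m" and P_diag: "\<And>c c'. c < m \<Longrightarrow> c' < m \<Longrightarrow> c \<noteq> c' \<Longrightarrow> P $$ (c, c') = 0"
    and K: "K \<in> carrier_mat n n" and x: "x \<in> carrier_vec (m * n)" and c: "c < m"
  shows "vec_block n (kron P K *\<^sub>v x) c = P $$ (c, c) \<cdot>\<^sub>v (K *\<^sub>v vec_block n x c)"
proof (rule eq_vecI)
  have PK: "kron P K \<in> carrier_mat (m * n) (m * n)" using P K by (rule kron_carrier_mat)
  show "dim_vec (vec_block n (kron P K *\<^sub>v x) c) = dim_vec (P $$ (c, c) \<cdot>\<^sub>v (K *\<^sub>v vec_block n x c))"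
    using K by (simp add: vec_block_def)
  fix l assume "l < dim_vec (P $$ (c, c) \<cdot>\<^sub>v (K *\<^sub>v vec_block n x c))"
  then have l: "l < n" using K by simp
  have i: "c * n + l < m * n" using c l by (rule mult_add_less_mult)
  have "vec_block n (kron P K *\<^sub>v x) c $ l = (\<Sum>j<m * n. kron P K $$ (c * n + l, j) * x $ j)"
    unfolding vec_block_def using l by (simp add: mult_mat_vec_index_sum[OF PK x i])
  also have "\<dots> = (\<Sum>c'<m. \<Sum>l'<n. P $$ (c, c') * K $$ (l, l') * x $ (c' * n + l'))"
    unfolding sum_lessThan_mult
    by (intro sum.cong refl) (use P K i l mult_add_less_mult in \<open>auto simp: kron_def\<close>)
  also have "\<dots> = (\<Sum>c'<m. if c' = c then (\<Sum>l'<n. P $$ (c, c) * K $$ (l, l') * x $ (c * n + l')) else 0)"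
    by (intro sum.cong refl) (use P_diag c in auto)
  also have "\<dots> = P $$ (c, c) * (\<Sum>l'<n. K $$ (l, l') * x $ (c * n + l'))"
    using c by (simp add: sum_distrib_left mult_ac)
  also have "\<dots> = (P $$ (c, c) \<cdot>\<^sub>v (K *\<^sub>v vec_block n x c)) $ l"
    using K l by (simp add: mult_mat_vec_index_sum[OF K vec_block_carrier l]) (simp add: vec_block_def)
  finally show "vec_block n (kron P K *\<^sub>v x) c $ l = (P $$ (c, c) \<cdot>\<^sub>v (K *\<^sub>v vec_block n x c)) $ l" .
qed

lemma vec_slice_kron_one_mat:
  assumes D: "D \<in> carrier_mat n n" and x: "x \<in> carrier_vec (n * w)" and l: "l < w"
  shows "vec_slice n w (kron D (1\<^sub>m w) *\<^sub>v x) l = D *\<^sub>v vec_slice n w x l"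
proof (rule eq_vecI)
  have DI: "kron D (1\<^sub>m w) \<in> carrier_mat (n * w) (n * w)" using D by (simp add: kron_carrier_mat)
  show "dim_vec (vec_slice n w (kron D (1\<^sub>m w) *\<^sub>v x) l) = dim_vec (D *\<^sub>v vec_slice n w x l)"
    using D by (simp add: vec_slice_def)
  fix a assume "a < dim_vec (D *\<^sub>v vec_slice n w x l)"
  then have a: "a < n" using D by simp
  have i: "a * w + l < n * w" using a l by (rule mult_add_less_mult)
  have "vec_slice n w (kron D (1\<^sub>m w) *\<^sub>v x) l $ a = (\<Sum>j<n * w. kron D (1\<^sub>m w) $$ (a * w + l, j) * x $ j)"
    unfolding vec_slice_def using a by (simp add: mult_mat_vec_index_sum[OF DI x i])
  also have "\<dots> = (\<Sum>a'<n. \<Sum>l'<w. if l' = l then D $$ (a, a') * x $ (a' * w + l) else 0)"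
    unfolding sum_lessThan_mult
    by (intro sum.cong refl) (use D i l mult_add_less_mult in \<open>auto simp: kron_def\<close>)
  also have "\<dots> = (D *\<^sub>v vec_slice n w x l) $ a"
    using l by (simp add: mult_mat_vec_index_sum[OF D vec_slice_carrier a]) (simp add: vec_slice_def)
  finally show "vec_slice n w (kron D (1\<^sub>m w) *\<^sub>v x) l $ a = (D *\<^sub>v vec_slice n w x l) $ a" .
qed

lemma kron_one_mat_vec_norm2:
  assumes Orc: "unitary_mat n Orc" and y: "y \<in> carrier_vec (n * w)"
  shows "vec_norm2 (kron Orc (1\<^sub>m w) *\<^sub>v y) = vec_norm2 y"
proof -
  have Orc_carrier: "Orc \<in> carrier_mat n n" using Orc by (rule unitary_mat_carrier)
  have "(vec_norm2 (kron Orc (1\<^sub>m w) *\<^sub>v y))\<^sup>2 = (\<Sum>l<w. (vec_norm2 (vec_slice n w (kron Orc (1\<^sub>m w) *\<^sub>v y) l))\<^sup>2)"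
    using kron_carrier_mat[OF Orc_carrier, of "1\<^sub>m w" w] y by (intro vec_norm2_power2_slices) simp
  also have "\<dots> = (\<Sum>l<w. (vec_norm2 (vec_slice n w y l))\<^sup>2)"
    by (simp add: vec_slice_kron_one_mat[OF Orc_carrier y] unitary_mat_vec_norm2[OF Orc])
  also have "\<dots> = (vec_norm2 y)\<^sup>2" using vec_norm2_power2_slices[OF y] by simp
  finally show ?thesis by (simp add: power2_eq_iff_nonneg)
qed

lemma kron_one_mat_diff_le:
  assumes O1: "O1 \<in> carrier_mat n n" and O0: "O0 \<in> carrier_mat n n" and \<epsilon>: "0 \<le> \<epsilon>"
    and close: "\<And>z. z \<in> carrier_vec n \<Longrightarrow> vec_norm2 (O1 *\<^sub>v z - O0 *\<^sub>v z) \<le> \<epsilon> * vec_norm2 z"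
    and y: "y \<in> carrier_vec (n * w)"
  shows "vec_norm2 (kron O1 (1\<^sub>m w) *\<^sub>v y - kron O0 (1\<^sub>m w) *\<^sub>v y) \<le> \<epsilon> * vec_norm2 y"
proof -
  have K1: "kron O1 (1\<^sub>m w) \<in> carrier_mat (n * w) (n * w)" using O1 by (simp add: kron_carrier_mat)
  have K0: "kron O0 (1\<^sub>m w) \<in> carrier_mat (n * w) (n * w)" using O0 by (simp add: kron_carrier_mat)
  have "(vec_norm2 (kron O1 (1\<^sub>m w) *\<^sub>v y - kron O0 (1\<^sub>m w) *\<^sub>v y))\<^sup>2
      = (\<Sum>l<w. (vec_norm2 (vec_slice n w (kron O1 (1\<^sub>m w) *\<^sub>v y - kron O0 (1\<^sub>m w) *\<^sub>v y) l))\<^sup>2)"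
    using K1 K0 y by (intro vec_norm2_power2_slices) auto
  also have "\<dots> = (\<Sum>l<w. (vec_norm2 (O1 *\<^sub>v vec_slice n w y l - O0 *\<^sub>v vec_slice n w y l))\<^sup>2)"
    using K1 K0 y
    by (simp add: vec_slice_minus vec_slice_kron_one_mat[OF O1 y] vec_slice_kron_one_mat[OF O0 y])
  also have "\<dots> \<le> (\<Sum>l<w. (\<epsilon> * vec_norm2 (vec_slice n w y l))\<^sup>2)"
    by (intro sum_mono power_mono close) auto
  also have "\<dots> = (\<epsilon> * vec_norm2 y)\<^sup>2"
    using vec_norm2_power2_slices[OF y] by (simp add: power_mult_distrib sum_distrib_left)
  finally show ?thesis using \<epsilon> by (simp add: power2_le_iff_abs_le)
qed

lemma proj0_carrier [simp]: "proj0 \<in> carrier_mat 2 2"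
  unfolding proj0_def by simp

lemma proj1_carrier [simp]: "proj1 \<in> carrier_mat 2 2"
  unfolding proj1_def by simp

lemma proj0_index: "c < 2 \<Longrightarrow> c' < 2 \<Longrightarrow> proj0 $$ (c, c') = (if c = 0 \<and> c' = 0 then 1 else 0)"
  unfolding proj0_def by simp

lemma proj1_index: "c < 2 \<Longrightarrow> c' < 2 \<Longrightarrow> proj1 $$ (c, c') = (if c = 1 \<and> c' = 1 then 1 else 0)"
  unfolding proj1_def by simp

lemma query_op_carrier_mat:
  assumes Orc: "Orc \<in> carrier_mat n n"
  shows "query_op n w Orc q \<in> carrier_mat (2 * (n * w)) (2 * (n * w))"
proof -
  have "(if snd q then mat_adjoint Orc else Orc) \<in> carrier_mat n n"
    using Orc mat_adjoint_carrier[OF Orc] by simp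
  then have K: "kron (if snd q then mat_adjoint Orc else Orc) (1\<^sub>m w) \<in> carrier_mat (n * w) (n * w)"
    by (simp add: kron_carrier_mat)
  have I: "1\<^sub>m (n * w) \<in> carrier_mat (n * w) (n * w)" by simp
  show ?thesis unfolding query_op_def Let_def
    using kron_carrier_mat[OF proj0_carrier I] kron_carrier_mat[OF proj1_carrier K]
      kron_carrier_mat[OF one_carrier_mat K]
    by auto
qed

lemma vec_block_query_op:
  assumes Orc: "Orc \<in> carrier_mat n n" and self_adj: "mat_adjoint Orc = Orc"
    and x: "x \<in> carrier_vec (2 * (n * w))" and c: "c < 2"
  shows "vec_block (n * w) (query_op n w Orc q *\<^sub>v x) c =
     (if fst q \<and> c = 0 then vec_block (n * w) x c else kron Orc (1\<^sub>m w) *\<^sub>v vec_block (n * w) x c)"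
proof -
  have K: "kron Orc (1\<^sub>m w) \<in> carrier_mat (n * w) (n * w)" using Orc by (simp add: kron_carrier_mat)
  have I: "1\<^sub>m (n * w) \<in> carrier_mat (n * w) (n * w)" by simp
  show ?thesis
  proof (cases "fst q")
    case False
    then have "query_op n w Orc q = kron (1\<^sub>m 2) (kron Orc (1\<^sub>m w))"
      unfolding query_op_def Let_def using self_adj by simp
    then show ?thesis
      using False vec_block_kron_diagonal[of "1\<^sub>m 2" 2 "kron Orc (1\<^sub>m w)" "n * w" x c] K x c by simp
  next
    case True
    have diag0: "proj0 $$ (c, c') = 0" and diag1: "proj1 $$ (c, c') = 0"
      if "c < 2" "c' < 2" "c \<noteq> c'" for c c'
      using that by (auto simp: proj0_index proj1_index)
    have P0: "kron proj0 (1\<^sub>m (n * w)) \<in> carrier_mat (2 * (n * w)) (2 * (n * w))"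
      using kron_carrier_mat[OF proj0_carrier I] .
    have P1: "kron proj1 (kron Orc (1\<^sub>m w)) \<in> carrier_mat (2 * (n * w)) (2 * (n * w))"
      using kron_carrier_mat[OF proj1_carrier K] .
    have "query_op n w Orc q *\<^sub>v x = kron proj0 (1\<^sub>m (n * w)) *\<^sub>v x + kron proj1 (kron Orc (1\<^sub>m w)) *\<^sub>v x"
      unfolding query_op_def Let_def using True self_adj add_mult_distrib_mat_vec[OF P0 P1 x] by simp
    then have "vec_block (n * w) (query_op n w Orc q *\<^sub>v x) c
        = proj0 $$ (c, c) \<cdot>\<^sub>v (1\<^sub>m (n * w) *\<^sub>v vec_block (n * w) x c)
          + proj1 $$ (c, c) \<cdot>\<^sub>v (kron Orc (1\<^sub>m w) *\<^sub>v vec_block (n * w) x c)"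
      using vec_block_add[OF mult_mat_vec_carrier[OF P0 x] mult_mat_vec_carrier[OF P1 x] c]
        vec_block_kron_diagonal[OF proj0_carrier diag0 I x c]
        vec_block_kron_diagonal[OF proj1_carrier diag1 K x c]
      by simp
    then show ?thesis
      using True c K by (cases "c = 0") (auto simp: proj0_index proj1_index intro!: eq_vecI)
  qed
qed

lemma query_op_vec_norm2:
  assumes Orc: "unitary_mat n Orc" and self_adj: "mat_adjoint Orc = Orc"
    and x: "x \<in> carrier_vec (2 * (n * w))"
  shows "vec_norm2 (query_op n w Orc q *\<^sub>v x) = vec_norm2 x"
proof -
  have Orc_carrier: "Orc \<in> carrier_mat n n" using Orc by (rule unitary_mat_carrier)
  have "query_op n w Orc q *\<^sub>v x \<in> carrier_vec (2 * (n * w))"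
    using mult_mat_vec_carrier[OF query_op_carrier_mat[OF Orc_carrier] x] .
  then have "(vec_norm2 (query_op n w Orc q *\<^sub>v x))\<^sup>2
      = (\<Sum>c<2. (vec_norm2 (vec_block (n * w) (query_op n w Orc q *\<^sub>v x) c))\<^sup>2)"
    by (rule vec_norm2_power2_blocks)
  also have "\<dots> = (\<Sum>c<2. (vec_norm2 (vec_block (n * w) x c))\<^sup>2)"
    by (intro sum.cong refl)
      (simp add: vec_block_query_op[OF Orc_carrier self_adj x] kron_one_mat_vec_norm2[OF Orc])
  also have "\<dots> = (vec_norm2 x)\<^sup>2" using vec_norm2_power2_blocks[OF x] by simp
  finally show ?thesis by (simp add: power2_eq_iff_nonneg)
qed

lemma query_op_diff_le:
  assumes O1: "O1 \<in> carrier_mat n n" and O0: "O0 \<in> carrier_mat n n"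
    and self_adj1: "mat_adjoint O1 = O1" and self_adj0: "mat_adjoint O0 = O0" and \<epsilon>: "0 \<le> \<epsilon>"
    and close: "\<And>z. z \<in> carrier_vec n \<Longrightarrow> vec_norm2 (O1 *\<^sub>v z - O0 *\<^sub>v z) \<le> \<epsilon> * vec_norm2 z"
    and x: "x \<in> carrier_vec (2 * (n * w))"
  shows "vec_norm2 (query_op n w O1 q *\<^sub>v x - query_op n w O0 q *\<^sub>v x) \<le> \<epsilon> * vec_norm2 x"
proof -
  let ?y1 = "query_op n w O1 q *\<^sub>v x" and ?y0 = "query_op n w O0 q *\<^sub>v x"
  have y1: "?y1 \<in> carrier_vec (2 * (n * w))" using mult_mat_vec_carrier[OF query_op_carrier_mat[OF O1] x] .
  have y0: "?y0 \<in> carrier_vec (2 * (n * w))" using mult_mat_vec_carrier[OF query_op_carrier_mat[OF O0] x] .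
  have block_le: "vec_norm2 (vec_block (n * w) (?y1 - ?y0) c) \<le> \<epsilon> * vec_norm2 (vec_block (n * w) x c)"
    if c: "c < 2" for c
  proof (cases "fst q \<and> c = 0")
    case True
    then show ?thesis using c \<epsilon>
      by (simp add: vec_block_minus[OF y1 y0] vec_block_query_op[OF O1 self_adj1 x]
          vec_block_query_op[OF O0 self_adj0 x])
  next
    case False
    then have "vec_block (n * w) (?y1 - ?y0) c
        = kron O1 (1\<^sub>m w) *\<^sub>v vec_block (n * w) x c - kron O0 (1\<^sub>m w) *\<^sub>v vec_block (n * w) x c"
      using c by (auto simp add: vec_block_minus[OF y1 y0] vec_block_query_op[OF O1 self_adj1 x]
          vec_block_query_op[OF O0 self_adj0 x])
    then show ?thesis using kron_one_mat_diff_le[OF O1 O0 \<epsilon> close vec_block_carrier] by simp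
  qed
  have "(vec_norm2 (?y1 - ?y0))\<^sup>2 = (\<Sum>c<2. (vec_norm2 (vec_block (n * w) (?y1 - ?y0) c))\<^sup>2)"
    using y1 y0 by (intro vec_norm2_power2_blocks) simp
  also have "\<dots> \<le> (\<Sum>c<2. (\<epsilon> * vec_norm2 (vec_block (n * w) x c))\<^sup>2)"
    using block_le by (intro sum_mono power_mono) auto
  also have "\<dots> = (\<epsilon> * vec_norm2 x)\<^sup>2"
    using vec_norm2_power2_blocks[OF x] by (simp add: power_mult_distrib sum_distrib_left)
  finally show ?thesis using \<epsilon> by (simp add: power2_le_iff_abs_le)
qed

section \<open>The hybrid argument\<close>

definition run_queries ::
  "nat \<Rightarrow> nat \<Rightarrow> complex mat \<Rightarrow> ((bool \<times> bool) \<times> complex mat) list \<Rightarrow> complex vec \<Rightarrow> complex vec" where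
  "run_queries n w Orc ss \<psi> = foldl (\<lambda>\<psi> (q, V). V *\<^sub>v (query_op n w Orc q *\<^sub>v \<psi>)) \<psi> ss"

lemma run_queries_Nil [simp]: "run_queries n w Orc [] \<psi> = \<psi>"
  unfolding run_queries_def by simp

lemma run_queries_Cons [simp]:
  "run_queries n w Orc ((q, V) # ss) \<psi> = run_queries n w Orc ss (V *\<^sub>v (query_op n w Orc q *\<^sub>v \<psi>))"
  unfolding run_queries_def by simp

lemma final_state_eq_run_queries:
  "final_state n A Orc = run_queries n (work_dim A) Orc (steps A) (init_unitary A *\<^sub>v unit_vec (alg_dim n A) 0)"
  unfolding final_state_def run_queries_def ..

lemma run_queries_carrier_vec_norm2:
  assumes Orc: "unitary_mat n Orc" and self_adj: "mat_adjoint Orc = Orc"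
    and V: "\<forall>s \<in> set ss. unitary_mat (2 * (n * w)) (snd s)" and x: "x \<in> carrier_vec (2 * (n * w))"
  shows "run_queries n w Orc ss x \<in> carrier_vec (2 * (n * w)) \<and>
         vec_norm2 (run_queries n w Orc ss x) = vec_norm2 x"
  using V x
proof (induction ss arbitrary: x)
  case Nil
  then show ?case by simp
next
  case (Cons s ss)
  obtain q V where s: "s = (q, V)" by (cases s)
  have V: "unitary_mat (2 * (n * w)) V" using Cons.prems s by simp
  have Qx: "query_op n w Orc q *\<^sub>v x \<in> carrier_vec (2 * (n * w))"
    using mult_mat_vec_carrier[OF query_op_carrier_mat[OF unitary_mat_carrier[OF Orc]] Cons.prems(2)] .
  have "V *\<^sub>v (query_op n w Orc q *\<^sub>v x) \<in> carrier_vec (2 * (n * w))"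
    using unitary_mat_carrier[OF V] Qx by simp
  moreover have "vec_norm2 (V *\<^sub>v (query_op n w Orc q *\<^sub>v x)) = vec_norm2 x"
    using unitary_mat_vec_norm2[OF V Qx] query_op_vec_norm2[OF Orc self_adj Cons.prems(2)] by simp
  ultimately show ?case using Cons.IH Cons.prems(1) s by simp
qed

lemma query_step_diff_le:
  assumes O1: "unitary_mat n O1" and O0: "unitary_mat n O0"
    and self_adj1: "mat_adjoint O1 = O1" and self_adj0: "mat_adjoint O0 = O0" and \<epsilon>: "0 \<le> \<epsilon>"
    and close: "\<And>z. z \<in> carrier_vec n \<Longrightarrow> vec_norm2 (O1 *\<^sub>v z - O0 *\<^sub>v z) \<le> \<epsilon> * vec_norm2 z"
    and V: "unitary_mat (2 * (n * w)) V"
    and x: "x \<in> carrier_vec (2 * (n * w))" and y: "y \<in> carrier_vec (2 * (n * w))"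
  shows "vec_norm2 (V *\<^sub>v (query_op n w O1 q *\<^sub>v x) - V *\<^sub>v (query_op n w O0 q *\<^sub>v y))
           \<le> vec_norm2 (x - y) + \<epsilon> * vec_norm2 y"
proof -
  have O1c: "O1 \<in> carrier_mat n n" and O0c: "O0 \<in> carrier_mat n n"
    using O1 O0 by (simp_all add: unitary_mat_carrier)
  have Vc: "V \<in> carrier_mat (2 * (n * w)) (2 * (n * w))" using V by (rule unitary_mat_carrier)
  let ?Q1 = "query_op n w O1 q" and ?Q0 = "query_op n w O0 q"
  have Q1: "?Q1 \<in> carrier_mat (2 * (n * w)) (2 * (n * w))" by (rule query_op_carrier_mat[OF O1c])
  have Q0: "?Q0 \<in> carrier_mat (2 * (n * w)) (2 * (n * w))" by (rule query_op_carrier_mat[OF O0c])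
  have Q1x: "?Q1 *\<^sub>v x \<in> carrier_vec (2 * (n * w))" using Q1 x by simp
  have Q1y: "?Q1 *\<^sub>v y \<in> carrier_vec (2 * (n * w))" using Q1 y by simp
  have Q0y: "?Q0 *\<^sub>v y \<in> carrier_vec (2 * (n * w))" using Q0 y by simp
  have "vec_norm2 (V *\<^sub>v (?Q1 *\<^sub>v x) - V *\<^sub>v (?Q0 *\<^sub>v y)) = vec_norm2 (?Q1 *\<^sub>v x - ?Q0 *\<^sub>v y)"
    using Q1x Q0y by (simp add: mult_minus_distrib_mat_vec[OF Vc Q1x Q0y, symmetric] unitary_mat_vec_norm2[OF V])
  also have "\<dots> \<le> vec_norm2 (?Q1 *\<^sub>v x - ?Q1 *\<^sub>v y) + vec_norm2 (?Q1 *\<^sub>v y - ?Q0 *\<^sub>v y)"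
    by (rule vec_norm2_triangle[OF Q1x Q1y Q0y])
  also have "vec_norm2 (?Q1 *\<^sub>v x - ?Q1 *\<^sub>v y) = vec_norm2 (x - y)"
    using x y by (simp add: mult_minus_distrib_mat_vec[OF Q1, symmetric] query_op_vec_norm2[OF O1 self_adj1])
  also have "vec_norm2 (?Q1 *\<^sub>v y - ?Q0 *\<^sub>v y) \<le> \<epsilon> * vec_norm2 y"
    by (rule query_op_diff_le[OF O1c O0c self_adj1 self_adj0 \<epsilon> close y])
  finally show ?thesis by simp
qed

lemma run_queries_diff_le:
  assumes O1: "unitary_mat n O1" and O0: "unitary_mat n O0"
    and self_adj1: "mat_adjoint O1 = O1" and self_adj0: "mat_adjoint O0 = O0" and \<epsilon>: "0 \<le> \<epsilon>"
    and close: "\<And>z. z \<in> carrier_vec n \<Longrightarrow> vec_norm2 (O1 *\<^sub>v z - O0 *\<^sub>v z) \<le> \<epsilon> * vec_norm2 z"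
    and V: "\<forall>s \<in> set ss. unitary_mat (2 * (n * w)) (snd s)"
    and x: "x \<in> carrier_vec (2 * (n * w))" and y: "y \<in> carrier_vec (2 * (n * w))"
  shows "vec_norm2 (run_queries n w O1 ss x - run_queries n w O0 ss y)
           \<le> vec_norm2 (x - y) + real (length ss) * \<epsilon> * vec_norm2 y"
  using V x y
proof (induction ss arbitrary: x y)
  case Nil
  then show ?case by simp
next
  case (Cons s ss)
  obtain q V where s: "s = (q, V)" by (cases s)
  have V: "unitary_mat (2 * (n * w)) V" using Cons.prems s by simp
  let ?x' = "V *\<^sub>v (query_op n w O1 q *\<^sub>v x)" and ?y' = "V *\<^sub>v (query_op n w O0 q *\<^sub>v y)"
  have x': "?x' \<in> carrier_vec (2 * (n * w))" and y': "?y' \<in> carrier_vec (2 * (n * w))"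
    using Cons.prems(2,3) unitary_mat_carrier[OF V] query_op_carrier_mat[OF unitary_mat_carrier[OF O1], of w q]
      query_op_carrier_mat[OF unitary_mat_carrier[OF O0], of w q] by simp_all
  have "vec_norm2 ?y' = vec_norm2 y"
    using Cons.prems(3) unitary_mat_vec_norm2[OF V] query_op_carrier_mat[OF unitary_mat_carrier[OF O0], of w q]
    by (simp add: query_op_vec_norm2[OF O0 self_adj0])
  then have "vec_norm2 (run_queries n w O1 (s # ss) x - run_queries n w O0 (s # ss) y)
      \<le> vec_norm2 (?x' - ?y') + real (length ss) * \<epsilon> * vec_norm2 y"
    using Cons.IH[OF _ x' y'] Cons.prems(1) s by simp
  with query_step_diff_le[OF O1 O0 self_adj1 self_adj0 \<epsilon> close V Cons.prems(2,3), of q]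
  show ?case by (simp add: algebra_simps)
qed

lemma prob_output1_diff_le:
  assumes A: "wf_qalg n A" and n: "0 < n" and O1: "unitary_mat n O1" and O0: "unitary_mat n O0"
    and self_adj1: "mat_adjoint O1 = O1" and self_adj0: "mat_adjoint O0 = O0" and \<epsilon>: "0 \<le> \<epsilon>"
    and close: "\<And>z. z \<in> carrier_vec n \<Longrightarrow> vec_norm2 (O1 *\<^sub>v z - O0 *\<^sub>v z) \<le> \<epsilon> * vec_norm2 z"
  shows "prob_output1 n A O1 - prob_output1 n A O0 \<le> 2 * (real (num_queries A) * \<epsilon>)"
proof -
  define w where "w = work_dim A"
  define \<psi> where "\<psi> = init_unitary A *\<^sub>v unit_vec (2 * (n * w)) 0"
  have dim: "alg_dim n A = 2 * (n * w)" unfolding alg_dim_def w_def by simp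
  have init: "unitary_mat (2 * (n * w)) (init_unitary A)"
    and V: "\<forall>s \<in> set (steps A). unitary_mat (2 * (n * w)) (snd s)"
    and "0 < w"
    using A unfolding wf_qalg_def dim w_def by auto
  then have \<psi>: "\<psi> \<in> carrier_vec (2 * (n * w))" "vec_norm2 \<psi> = 1"
    unfolding \<psi>_def using n unitary_mat_carrier[OF init]
    by (simp_all add: unitary_mat_vec_norm2 vec_norm2_unit_vec)
  have final: "final_state n A Orc = run_queries n w Orc (steps A) \<psi>" for Orc
    unfolding final_state_eq_run_queries dim \<psi>_def w_def ..
  note F1 = run_queries_carrier_vec_norm2[OF O1 self_adj1 V \<psi>(1)]
  note F0 = run_queries_carrier_vec_norm2[OF O0 self_adj0 V \<psi>(1)]
  have "prob_output1 n A O1 - prob_output1 n A O0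
      \<le> 2 * vec_norm2 (final_state n A O1 - final_state n A O0)"
    unfolding prob_output1_def dim final using F1 F0 \<psi>(2) by (intro sum_cmod_power2_diff_le) auto
  also have "\<dots> \<le> 2 * (real (num_queries A) * \<epsilon>)"
    using run_queries_diff_le[OF O1 O0 self_adj1 self_adj0 \<epsilon> close V \<psi>(1) \<psi>(1)] \<psi>(2)
    unfolding final num_queries_def by simp
  finally show ?thesis .
qed

section \<open>One query suffices for block-encodings\<close>

definition single_query_alg :: "nat \<Rightarrow> qalg" where
  "single_query_alg n = \<lparr>work_dim = 1, init_unitary = 1\<^sub>m (2 * n),
     steps = [((False, False), 1\<^sub>m (2 * n))], accept_set = {0}\<rparr>"

lemma alg_dim_single_query_alg [simp]: "alg_dim n (single_query_alg n) = 2 * n"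
  unfolding alg_dim_def single_query_alg_def by simp

lemma wf_single_query_alg: "wf_qalg n (single_query_alg n)"
  unfolding wf_qalg_def alg_dim_single_query_alg by (simp add: single_query_alg_def unitary_mat_one)

lemma num_queries_single_query_alg: "num_queries (single_query_alg n) = 1"
  unfolding num_queries_def single_query_alg_def by simp

lemma prob_output1_single_query_alg:
  assumes Orc: "Orc \<in> carrier_mat n n" and n: "0 < n"
  shows "prob_output1 n (single_query_alg n) Orc = (cmod (Orc $$ (0, 0)))\<^sup>2"
proof -
  let ?Q = "query_op n 1 Orc (False, False)"
  have Q: "?Q \<in> carrier_mat (2 * n) (2 * n)" using query_op_carrier_mat[OF Orc, of 1] by simp
  have final: "final_state n (single_query_alg n) Orc = ?Q *\<^sub>v unit_vec (2 * n) 0"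
    using Q unfolding final_state_def alg_dim_single_query_alg by (simp add: single_query_alg_def)
  have "(?Q *\<^sub>v unit_vec (2 * n) 0) $ 0 = ?Q $$ (0, 0)"
    using n by (subst mult_mat_vec_index_sum[OF Q]) (simp_all add: unit_vec_def if_distrib cong: if_cong)
  moreover have "?Q $$ (0, 0) = Orc $$ (0, 0)"
    unfolding query_op_def Let_def kron_def using Orc n by simp
  ultimately show ?thesis
    using n unfolding prob_output1_def alg_dim_single_query_alg final
    by (simp add: single_query_alg_def)
qed

lemma block_encoding_single_query:
  assumes N: "N \<ge> 2" and d: "d \<ge> 1"
  shows "\<exists>A. wf_qalg (N * d) A \<and> num_queries A = 1 \<and>
           (\<forall>C U. perm_matrix N C \<longrightarrow> block_encoding N d C U \<longrightarrow> success_prob (N * d) A C U = 1)"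
proof (intro exI conjI allI impI)
  fix C U assume C: "perm_matrix N C" and U: "block_encoding N d C U"
  have "U \<in> carrier_mat (N * d) (N * d)"
    using U unfolding block_encoding_def by (simp add: unitary_mat_carrier)
  moreover have "U $$ (0, 0) = C $$ (0, 0)"
    using U N unfolding block_encoding_def by (metis mult_0 less_le_trans pos2)
  moreover have "C $$ (0, 0) = 0 \<or> C $$ (0, 0) = 1"
    using C N unfolding perm_matrix_def by (metis less_le_trans pos2)
  ultimately show "success_prob (N * d) (single_query_alg (N * d)) C U = 1"
    using N d by (auto simp: success_prob_def prob_output1_single_query_alg)
qed (simp_all add: wf_single_query_alg num_queries_single_query_alg)

section \<open>Householder reflections\<close>

definition householder :: "nat \<Rightarrow> complex vec \<Rightarrow> complex \<Rightarrow> complex mat" where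
  "householder n u a = mat n n (\<lambda>(i, j). (if i = j then 1 else 0) - a * u $ i * cnj (u $ j))"

lemma householder_carrier [simp]: "householder n u a \<in> carrier_mat n n"
  unfolding householder_def by simp

lemma dim_householder [simp]:
  "dim_row (householder n u a) = n" "dim_col (householder n u a) = n"
  unfolding householder_def by simp_all

lemma householder_mult_vec:
  assumes u: "u \<in> carrier_vec n" and y: "y \<in> carrier_vec n"
  shows "householder n u a *\<^sub>v y = y - (a * (\<Sum>j<n. cnj (u $ j) * y $ j)) \<cdot>\<^sub>v u"
proof (rule eq_vecI)
  fix i assume "i < dim_vec (y - (a * (\<Sum>j<n. cnj (u $ j) * y $ j)) \<cdot>\<^sub>v u)"
  then have i: "i < n" using u by simp
  have "(householder n u a *\<^sub>v y) $ i
      = (\<Sum>j<n. (if i = j then y $ j else 0) - a * u $ i * (cnj (u $ j) * y $ j))"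
    unfolding mult_mat_vec_index_sum[OF householder_carrier y i]
    by (intro sum.cong refl) (use i in \<open>auto simp: householder_def algebra_simps\<close>)
  also have "\<dots> = y $ i - a * u $ i * (\<Sum>j<n. cnj (u $ j) * y $ j)"
    using i by (simp add: sum_subtractf sum_distrib_left)
  also have "\<dots> = (y - (a * (\<Sum>j<n. cnj (u $ j) * y $ j)) \<cdot>\<^sub>v u) $ i"
    using i u y by simp
  finally show "(householder n u a *\<^sub>v y) $ i = (y - (a * (\<Sum>j<n. cnj (u $ j) * y $ j)) \<cdot>\<^sub>v u) $ i" .
qed (use u y in simp)

lemma mat_adjoint_householder:
  assumes "cnj a = a"
  shows "mat_adjoint (householder n u a) = householder n u a"
proof -
  have "mat_adjoint (householder n u a) \<in> carrier_mat n n" by (rule mat_adjoint_carrier) simp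
  then show ?thesis
    using assms by (intro eq_matI) (auto simp: mat_adjoint_index[of _ n n] householder_def)
qed

lemma householder_involution:
  assumes u: "u \<in> carrier_vec n" and a: "a * a * (\<Sum>j<n. u $ j * cnj (u $ j)) = 2 * a"
  shows "householder n u a * householder n u a = 1\<^sub>m n"
proof (rule eq_matI)
  let ?H = "householder n u a"
  fix i k assume "i < dim_row (1\<^sub>m n :: complex mat)" "k < dim_col (1\<^sub>m n :: complex mat)"
  then have i: "i < n" and k: "k < n" by auto
  have "(?H * ?H) $$ (i, k) = (\<Sum>j<n. ?H $$ (i, j) * ?H $$ (j, k))"
    using i k by (subst index_mult_mat) (auto simp: scalar_prod_def atLeast0LessThan intro!: sum.cong)
  also have "\<dots> = (\<Sum>j<n. (if i = j then (if j = k then 1 else 0) else 0)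
        - (if i = j then a * u $ j * cnj (u $ k) else 0)
        - (if j = k then a * u $ i * cnj (u $ j) else 0)
        + a * a * u $ i * cnj (u $ k) * (u $ j * cnj (u $ j)))"
    by (intro sum.cong refl) (use i k in \<open>auto simp: householder_def algebra_simps\<close>)
  also have "\<dots> = (if i = k then 1 else 0)
        + u $ i * cnj (u $ k) * (a * a * (\<Sum>j<n. u $ j * cnj (u $ j)) - 2 * a)"
    using i k by (simp add: sum.distrib sum_subtractf sum_distrib_left algebra_simps)
  also have "\<dots> = 1\<^sub>m n $$ (i, k)" using a i k by simp
  finally show "(?H * ?H) $$ (i, k) = 1\<^sub>m n $$ (i, k)" .
qed auto

text \<open>For a unit vector \<open>v\<close> with real \<open>v\<^sub>0 < 1\<close>, the reflection in the hyperplane orthogonal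
  to \<open>e\<^sub>0 - v\<close> is a self-adjoint unitary exchanging \<open>e\<^sub>0\<close> and \<open>v\<close>.\<close>

definition reflection_onto :: "nat \<Rightarrow> complex vec \<Rightarrow> complex mat" where
  "reflection_onto n v = householder n (unit_vec n 0 - v) (complex_of_real (1 / (1 - Re (v $ 0))))"

lemma mat_adjoint_reflection_onto: "mat_adjoint (reflection_onto n v) = reflection_onto n v"
  unfolding reflection_onto_def by (simp add: mat_adjoint_householder)

lemma vec_norm2_unit_vec_minus:
  assumes v: "v \<in> carrier_vec n" and n: "0 < n" and v_norm: "vec_norm2 v = 1"
    and v0: "v $ 0 = complex_of_real r"
  shows "vec_norm2 (unit_vec n 0 - v) = sqrt (2 - 2 * r)"
proof -
  have "(vec_norm2 (unit_vec n 0 - v))\<^sup>2 = (\<Sum>j<n. (cmod ((unit_vec n 0 - v) $ j))\<^sup>2)"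
    using v by (simp add: vec_norm2_power2)
  also have "\<dots> = (\<Sum>j<n. (cmod (v $ j))\<^sup>2 + (if j = 0 then 1 - 2 * r else 0))"
  proof (intro sum.cong refl)
    fix j assume j: "j \<in> {..<n}"
    show "(cmod ((unit_vec n 0 - v) $ j))\<^sup>2 = (cmod (v $ j))\<^sup>2 + (if j = 0 then 1 - 2 * r else 0)"
    proof (cases "j = 0")
      case True
      then have "(unit_vec n 0 - v) $ j = complex_of_real (1 - r)" using j v v0 by simp
      then have "(cmod ((unit_vec n 0 - v) $ j))\<^sup>2 = (1 - r)\<^sup>2" by (simp only: norm_of_real power2_abs)
      moreover have "(cmod (v $ j))\<^sup>2 = r\<^sup>2" using True v0 by (simp add: power2_abs)
      ultimately show ?thesis using True by (simp add: power2_eq_square algebra_simps)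
    qed (use j v in simp)
  qed
  also have "\<dots> = 2 - 2 * r" using v n v_norm vec_norm2_power2[of v] by (simp add: sum.distrib)
  finally show ?thesis by (metis vec_norm2_nonneg real_sqrt_unique)
qed

lemma
  assumes v: "v \<in> carrier_vec n" and n: "0 < n" and v_norm: "vec_norm2 v = 1"
    and v0: "v $ 0 = complex_of_real r" and r: "r < 1"
  shows unitary_reflection_onto: "unitary_mat n (reflection_onto n v)"
    and reflection_onto_unit_vec: "reflection_onto n v *\<^sub>v unit_vec n 0 = v"
proof -
  define u where "u = unit_vec n 0 - v"
  define a where "a = complex_of_real (1 / (1 - r))"
  have u: "u \<in> carrier_vec n" unfolding u_def using v by simp
  have H: "reflection_onto n v = householder n u a"
    unfolding reflection_onto_def u_def a_def v0 by simp
  have "(vec_norm2 u)\<^sup>2 = 2 - 2 * r"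
    unfolding u_def vec_norm2_unit_vec_minus[OF v n v_norm v0] using r by simp
  then have "(\<Sum>j<n. u $ j * cnj (u $ j)) = complex_of_real (2 - 2 * r)"
    using vec_norm2_power2_complex[of u] u by simp
  then have "a * a * (\<Sum>j<n. u $ j * cnj (u $ j)) = 2 * a"
    unfolding a_def using r
    by (simp add: field_simps power2_eq_square del: of_real_diff of_real_mult) (simp add: field_simps)
  then show "unitary_mat n (reflection_onto n v)"
    unfolding unitary_mat_def H[symmetric] mat_adjoint_reflection_onto
    using householder_involution[OF u] H by simp
  have "(\<Sum>j<n. cnj (u $ j) * unit_vec n 0 $ j) = cnj (u $ 0)"
    using n by (simp add: unit_vec_def if_distrib cong: if_cong)
  also have "\<dots> = complex_of_real (1 - r)" using n v v0 unfolding u_def by simp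
  finally have "a * (\<Sum>j<n. cnj (u $ j) * unit_vec n 0 $ j) = 1"
    unfolding a_def using r by (simp flip: of_real_mult)
  then show "reflection_onto n v *\<^sub>v unit_vec n 0 = v"
    unfolding H householder_mult_vec[OF u unit_vec_carrier] using v unfolding u_def by auto
qed

lemma householder_diff_le:
  assumes u1: "u1 \<in> carrier_vec n" and u0: "u0 \<in> carrier_vec n" and z: "z \<in> carrier_vec n"
    and u1_le: "vec_norm2 u1 \<le> 2" and u0_le: "vec_norm2 u0 \<le> 2" and close: "vec_norm2 (u0 - u1) \<le> \<delta>"
  shows "vec_norm2 (householder n u1 a *\<^sub>v z - householder n u0 1 *\<^sub>v z)
           \<le> (cmod (a - 1) * (vec_norm2 u1)\<^sup>2 + 4 * \<delta>) * vec_norm2 z"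
proof -
  define s1 where "s1 = (\<Sum>j<n. cnj (u1 $ j) * z $ j)"
  define s0 where "s0 = (\<Sum>j<n. cnj (u0 $ j) * z $ j)"
  have s1_le: "cmod s1 \<le> vec_norm2 u1 * vec_norm2 z"
    unfolding s1_def by (rule cmod_inner_le_vec_norm2[OF u1 z])
  have s0_le: "cmod s0 \<le> 2 * vec_norm2 z"
    using cmod_inner_le_vec_norm2[OF u0 z] u0_le unfolding s0_def
    by (meson mult_right_mono order_trans vec_norm2_nonneg)
  have s01: "s0 - s1 = (\<Sum>j<n. cnj ((u0 - u1) $ j) * z $ j)"
    unfolding s0_def s1_def using u0 u1 by (simp add: sum_subtractf[symmetric] algebra_simps)
  have "cmod (s0 - s1) \<le> vec_norm2 (u0 - u1) * vec_norm2 z"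
    unfolding s01 by (rule cmod_inner_le_vec_norm2) (use u0 u1 z in auto)
  then have s01_le: "cmod (s0 - s1) \<le> \<delta> * vec_norm2 z"
    using close by (meson mult_right_mono vec_norm2_nonneg order_trans)
  have "householder n u1 a *\<^sub>v z - householder n u0 1 *\<^sub>v z
      = (- (a - 1) * s1) \<cdot>\<^sub>v u1 + ((s0 - s1) \<cdot>\<^sub>v u1 + s0 \<cdot>\<^sub>v (u0 - u1))"
    unfolding householder_mult_vec[OF u1 z] householder_mult_vec[OF u0 z] s1_def[symmetric] s0_def[symmetric]
    using u1 u0 z by (intro eq_vecI) (auto simp: algebra_simps)
  also have "vec_norm2 \<dots> \<le> cmod (a - 1) * cmod s1 * vec_norm2 u1
      + (cmod (s0 - s1) * vec_norm2 u1 + cmod s0 * vec_norm2 (u0 - u1))"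
    using u1 u0 vec_norm2_add_le[of "(s0 - s1) \<cdot>\<^sub>v u1" n "s0 \<cdot>\<^sub>v (u0 - u1)"]
      vec_norm2_add_le[of "(- (a - 1) * s1) \<cdot>\<^sub>v u1" n "(s0 - s1) \<cdot>\<^sub>v u1 + s0 \<cdot>\<^sub>v (u0 - u1)"]
    by (simp add: vec_norm2_smult norm_mult norm_minus_commute)
  also have "\<dots> \<le> cmod (a - 1) * (vec_norm2 u1 * vec_norm2 z) * vec_norm2 u1
      + ((\<delta> * vec_norm2 z) * 2 + (2 * vec_norm2 z) * \<delta>)"
    using s1_le s0_le s01_le u1_le close order_trans[OF vec_norm2_nonneg close]
    by (intro add_mono mult_mono mult_right_mono mult_left_mono) auto
  finally show ?thesis by (simp add: power2_eq_square algebra_simps)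
qed

lemma reflection_onto_diff_le:
  assumes v1: "v1 \<in> carrier_vec n" and v0: "v0 \<in> carrier_vec n" and n: "0 < n"
    and v1_norm: "vec_norm2 v1 = 1" and v0_norm: "vec_norm2 v0 = 1"
    and v1_0: "v1 $ 0 = complex_of_real r" and v0_0: "v0 $ 0 = 0" and r: "0 \<le> r" "r < 1"
    and close: "vec_norm2 (v1 - v0) \<le> \<delta>" and z: "z \<in> carrier_vec n"
  shows "vec_norm2 (reflection_onto n v1 *\<^sub>v z - reflection_onto n v0 *\<^sub>v z) \<le> (2 * r + 4 * \<delta>) * vec_norm2 z"
proof -
  define u1 where "u1 = unit_vec n 0 - v1"
  define u0 where "u0 = unit_vec n 0 - v0"
  define a where "a = complex_of_real (1 / (1 - r))"
  have u1_norm: "vec_norm2 u1 = sqrt (2 - 2 * r)"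
    unfolding u1_def by (rule vec_norm2_unit_vec_minus[OF v1 n v1_norm v1_0])
  have u0_norm: "vec_norm2 u0 = sqrt 2"
    unfolding u0_def using vec_norm2_unit_vec_minus[OF v0 n v0_norm, of 0] v0_0 by simp
  have "u0 - u1 = v1 - v0" unfolding u0_def u1_def using v0 v1 by (intro eq_vecI) auto
  moreover have "sqrt (2 - 2 * r) \<le> 2" "sqrt 2 \<le> (2::real)"
    using r real_sqrt_le_mono[of "2 - 2 * r" 4] real_sqrt_le_mono[of 2 4] by simp_all
  ultimately have "vec_norm2 (householder n u1 a *\<^sub>v z - householder n u0 1 *\<^sub>v z)
      \<le> (cmod (a - 1) * (vec_norm2 u1)\<^sup>2 + 4 * \<delta>) * vec_norm2 z"
    using v1 v0 z close unfolding u1_def u0_def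
    by (intro householder_diff_le) (auto simp: u1_norm[unfolded u1_def] u0_norm[unfolded u0_def])
  moreover have "cmod (a - 1) * (vec_norm2 u1)\<^sup>2 = 2 * r"
  proof -
    have "a - 1 = complex_of_real (r / (1 - r))" unfolding a_def using r by (simp add: field_simps)
    then have "cmod (a - 1) = r / (1 - r)" using r by (simp only: norm_of_real) simp
    then show ?thesis unfolding u1_norm using r by (simp add: field_simps)
  qed
  moreover have "reflection_onto n v1 = householder n u1 a" "reflection_onto n v0 = householder n u0 1"
    unfolding reflection_onto_def u1_def u0_def a_def v1_0 v0_0 by simp_all
  ultimately show ?thesis by simp
qed

section \<open>A lower bound for state-preparation oracles\<close>

definition perm_mat :: "nat \<Rightarrow> (nat \<Rightarrow> nat) \<Rightarrow> complex mat" where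
  "perm_mat N \<sigma> = mat N N (\<lambda>(j, k). if j = \<sigma> k then 1 else 0)"

lemma perm_matrix_perm_mat: "\<sigma> permutes {..<N} \<Longrightarrow> perm_matrix N (perm_mat N \<sigma>)"
  unfolding perm_matrix_def perm_mat_def by auto

lemma vectorize_perm_mat_index:
  assumes "j < N" "k < N"
  shows "vectorize N (perm_mat N \<sigma>) $ (j * N + k) = (if j = \<sigma> k then 1 else 0)"
  using assms mult_add_less_mult[OF assms] unfolding vectorize_def perm_mat_def by simp

lemma vec_norm2_vectorize_perm_mat:
  assumes \<sigma>: "\<sigma> permutes {..<N}"
  shows "vec_norm2 (vectorize N (perm_mat N \<sigma>)) = sqrt (real N)"
proof -
  have "(\<Sum>i<N * N. (cmod (vectorize N (perm_mat N \<sigma>) $ i))\<^sup>2) = (\<Sum>j<N. \<Sum>k<N. if j = \<sigma> k then 1 else 0)"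
    unfolding sum_lessThan_mult by (intro sum.cong refl) (simp add: vectorize_perm_mat_index)
  also have "\<dots> = (\<Sum>k<N. \<Sum>j<N. if j = \<sigma> k then 1 else 0)"
    by (rule sum.swap)
  also have "\<dots> = real N"
    using permutes_in_image[OF \<sigma>] by simp
  finally show ?thesis unfolding vec_norm2_def vectorize_def by simp
qed

lemma vec_norm2_vectorize_perm_mat_id_minus_transpose:
  assumes N: "N \<ge> 2"
  shows "vec_norm2 (vectorize N (perm_mat N id) - vectorize N (perm_mat N (transpose 0 1))) = 2"
proof -
  let ?t = "transpose (0::nat) 1"
  let ?x = "vectorize N (perm_mat N id) - vectorize N (perm_mat N ?t)"
  have column: "(\<Sum>j<N. (cmod ((if j = k then 1 else 0) - (if j = ?t k then 1 else 0)))\<^sup>2)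
      = (if k \<in> {0, 1} then 2 else 0)" if k: "k < N" for k
  proof (cases "k \<in> {0, 1}")
    case True
    then have "?t k \<noteq> k" "?t k < N" using N by (auto simp: transpose_def)
    then have "(\<Sum>j<N. (cmod ((if j = k then 1 else 0) - (if j = ?t k then 1 else 0)))\<^sup>2)
        = (\<Sum>j<N. (if j = k then 1 else 0) + (if j = ?t k then 1 else 0))"
      by (intro sum.cong refl) auto
    then show ?thesis using True k \<open>?t k < N\<close> by (simp add: sum.distrib)
  next
    case False
    then show ?thesis by (simp add: transpose_def)
  qed
  have "(\<Sum>i<N * N. (cmod (?x $ i))\<^sup>2)
      = (\<Sum>j<N. \<Sum>k<N. (cmod ((if j = k then 1 else 0) - (if j = ?t k then 1 else 0)))\<^sup>2)"
  proof (unfold sum_lessThan_mult, intro sum.cong refl)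
    fix j k assume jk: "j \<in> {..<N}" "k \<in> {..<N}"
    have "?x $ (j * N + k)
        = vectorize N (perm_mat N id) $ (j * N + k) - vectorize N (perm_mat N ?t) $ (j * N + k)"
      using jk mult_add_less_mult[of j N k N] by (intro index_minus_vec(1)) (simp add: vectorize_def)
    also have "\<dots> = (if j = k then 1 else 0) - (if j = ?t k then 1 else 0)"
      using jk by (simp only: vectorize_perm_mat_index lessThan_iff id_apply)
    finally have "?x $ (j * N + k) = (if j = k then 1 else 0) - (if j = ?t k then 1 else 0)" .
    then show "(cmod (?x $ (j * N + k)))\<^sup>2
        = (cmod ((if j = k then 1 else 0) - (if j = ?t k then 1 else 0)))\<^sup>2" by simp
  qed
  also have "\<dots> = (\<Sum>k<N. if k \<in> {0, 1} then 2 else 0)"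
    by (subst sum.swap, intro sum.cong refl) (rule column, simp)
  also have "\<dots> = (\<Sum>k\<in>{..<N} \<inter> {0, 1}. 2)"
    by (rule sum.inter_restrict[symmetric]) simp
  also have "{..<N} \<inter> {0, 1} = {0::nat, 1}"
    using N by auto
  finally show ?thesis unfolding vec_norm2_def vectorize_def by simp
qed

definition target_state :: "nat \<Rightarrow> complex mat \<Rightarrow> complex vec" where
  "target_state N C = (1 / complex_of_real (vec_norm2 (vectorize N C))) \<cdot>\<^sub>v vectorize N C"

lemma target_state_carrier [simp]: "target_state N C \<in> carrier_vec (N * N)"
  unfolding target_state_def vectorize_def by simp

lemma state_prep_oracle_reflection_onto:
  assumes N: "0 < N" and norm: "vec_norm2 (target_state N C) = 1"
    and entry: "target_state N C $ 0 = complex_of_real r" and r: "r < 1"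
  shows "state_prep_oracle N C (reflection_onto (N * N) (target_state N C))"
  unfolding state_prep_oracle_def target_state_def[symmetric]
  using N unitary_reflection_onto[OF _ _ norm entry r] reflection_onto_unit_vec[OF _ _ norm entry r]
  by simp

lemma
  assumes \<sigma>: "\<sigma> permutes {..<N}" and N: "0 < N"
  shows vec_norm2_target_state_perm_mat: "vec_norm2 (target_state N (perm_mat N \<sigma>)) = 1"
    and target_state_perm_mat:
      "target_state N (perm_mat N \<sigma>) = (1 / complex_of_real (sqrt (real N))) \<cdot>\<^sub>v vectorize N (perm_mat N \<sigma>)"
  unfolding target_state_def using N
  by (simp_all add: vec_norm2_smult norm_divide vec_norm2_vectorize_perm_mat[OF \<sigma>])

lemma close_state_prep_oracles:
  assumes N: "N \<ge> 2"
  obtains U1 U0 where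
    "state_prep_oracle N (perm_mat N id) U1" "mat_adjoint U1 = U1"
    "state_prep_oracle N (perm_mat N (transpose 0 1)) U0" "mat_adjoint U0 = U0"
    "\<And>z. z \<in> carrier_vec (N * N) \<Longrightarrow> vec_norm2 (U1 *\<^sub>v z - U0 *\<^sub>v z) \<le> 10 / sqrt (real N) * vec_norm2 z"
proof -
  define sN where "sN = sqrt (real N)"
  define v1 where "v1 = target_state N (perm_mat N id)"
  define v0 where "v0 = target_state N (perm_mat N (transpose 0 1))"
  have N0: "0 < N" and n: "0 < N * N" using N by simp_all
  have sN: "1 < sN" unfolding sN_def using N by simp
  have perms: "id permutes {..<N}" "transpose 0 1 permutes {..<N}"
    using N by (simp_all add: permutes_id permutes_swap_id)
  have v1_norm: "vec_norm2 v1 = 1" and v0_norm: "vec_norm2 v0 = 1"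
    unfolding v1_def v0_def using perms N0 by (simp_all add: vec_norm2_target_state_perm_mat)
  have v1_0: "v1 $ 0 = complex_of_real (1 / sN)" and v0_0: "v0 $ 0 = complex_of_real 0"
    unfolding v1_def v0_def sN_def target_state_perm_mat[OF perms(1) N0] target_state_perm_mat[OF perms(2) N0]
    using vectorize_perm_mat_index[of 0 N 0] N0 by (simp_all add: vectorize_def transpose_def)
  have "v1 - v0 = (1 / complex_of_real sN) \<cdot>\<^sub>v
      (vectorize N (perm_mat N id) - vectorize N (perm_mat N (transpose 0 1)))"
    unfolding v1_def v0_def sN_def target_state_perm_mat[OF perms(1) N0] target_state_perm_mat[OF perms(2) N0]
    by (intro eq_vecI) (auto simp: algebra_simps vectorize_def)
  then have close: "vec_norm2 (v1 - v0) \<le> 2 / sN"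
    using vec_norm2_vectorize_perm_mat_id_minus_transpose[OF N] sN by (simp add: vec_norm2_smult norm_divide)
  have r: "0 \<le> 1 / sN" "1 / sN < 1" using sN by simp_all
  show ?thesis
  proof
    show "state_prep_oracle N (perm_mat N id) (reflection_onto (N * N) v1)"
      unfolding v1_def by (rule state_prep_oracle_reflection_onto[OF N0 v1_norm[unfolded v1_def] v1_0[unfolded v1_def] r(2)])
    show "state_prep_oracle N (perm_mat N (transpose 0 1)) (reflection_onto (N * N) v0)"
      unfolding v0_def by (rule state_prep_oracle_reflection_onto[OF N0 v0_norm[unfolded v0_def] v0_0[unfolded v0_def]]) simp
  next
    fix z :: "complex vec" assume "z \<in> carrier_vec (N * N)"
    then have "vec_norm2 (reflection_onto (N * N) v1 *\<^sub>v z - reflection_onto (N * N) v0 *\<^sub>v z)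
        \<le> (2 * (1 / sN) + 4 * (2 / sN)) * vec_norm2 z"
      using v0_0 by (intro reflection_onto_diff_le[OF _ _ n v1_norm v0_norm v1_0 _ r close]) (simp_all add: v1_def v0_def)
    then show "vec_norm2 (reflection_onto (N * N) v1 *\<^sub>v z - reflection_onto (N * N) v0 *\<^sub>v z)
        \<le> 10 / sqrt (real N) * vec_norm2 z"
      unfolding sN_def by simp
  qed (simp_all add: mat_adjoint_reflection_onto)
qed

lemma state_prep_query_lower_bound:
  assumes N: "N \<ge> 2" and A: "wf_qalg (N * N) A"
    and correct: "\<forall>C U. perm_matrix N C \<longrightarrow> state_prep_oracle N C U \<longrightarrow> success_prob (N * N) A C U \<ge> 2 / 3"
  shows "real (num_queries A) \<ge> 1 / 60 * sqrt (real N)"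
proof -
  let ?t = "transpose (0::nat) 1"
  obtain U1 U0 where U1: "state_prep_oracle N (perm_mat N id) U1" "mat_adjoint U1 = U1"
    and U0: "state_prep_oracle N (perm_mat N ?t) U0" "mat_adjoint U0 = U0"
    and close: "\<And>z. z \<in> carrier_vec (N * N) \<Longrightarrow>
      vec_norm2 (U1 *\<^sub>v z - U0 *\<^sub>v z) \<le> 10 / sqrt (real N) * vec_norm2 z"
    using close_state_prep_oracles[OF N] by blast
  have "perm_mat N id $$ (0, 0) = 1" "perm_mat N ?t $$ (0, 0) \<noteq> 1"
    using N by (simp_all add: perm_mat_def)
  moreover have "success_prob (N * N) A (perm_mat N id) U1 \<ge> 2 / 3"
    "success_prob (N * N) A (perm_mat N ?t) U0 \<ge> 2 / 3"
    using correct U1 U0 N by (simp_all add: perm_matrix_perm_mat permutes_id permutes_swap_id)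
  ultimately have "1 / 3 \<le> prob_output1 (N * N) A U1 - prob_output1 (N * N) A U0"
    unfolding success_prob_def by simp
  also have "\<dots> \<le> 2 * (real (num_queries A) * (10 / sqrt (real N)))"
    using U1 U0 N unfolding state_prep_oracle_def
    by (intro prob_output1_diff_le[OF A] close) simp_all
  finally show ?thesis using N by (simp add: field_simps)
qed

theorem theorem2:
  shows "(\<forall>N d. N \<ge> 2 \<longrightarrow> d \<ge> 1 \<longrightarrow>
            (\<exists>A. wf_qalg (N * d) A \<and> num_queries A = 1 \<and>
               (\<forall>C U. perm_matrix N C \<longrightarrow> block_encoding N d C U \<longrightarrow>
                  success_prob (N * d) A C U = 1)))
       \<and> (\<exists>c > 0. \<forall>N A. N \<ge> 2 \<longrightarrow> wf_qalg (N * N) A \<longrightarrow>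
            (\<forall>C U. perm_matrix N C \<longrightarrow> state_prep_oracle N C U \<longrightarrow>
               success_prob (N * N) A C U \<ge> 2 / 3) \<longrightarrow>
            real (num_queries A) \<ge> c * sqrt (real N))"
proof
  show "\<forall>N d. N \<ge> 2 \<longrightarrow> d \<ge> 1 \<longrightarrow>
            (\<exists>A. wf_qalg (N * d) A \<and> num_queries A = 1 \<and>
               (\<forall>C U. perm_matrix N C \<longrightarrow> block_encoding N d C U \<longrightarrow>
                  success_prob (N * d) A C U = 1))"
    using block_encoding_single_query by blast
  show "\<exists>c > 0. \<forall>N A. N \<ge> 2 \<longrightarrow> wf_qalg (N * N) A \<longrightarrow>
            (\<forall>C U. perm_matrix N C \<longrightarrow> state_prep_oracle N C U \<longrightarrow>
               success_prob (N * N) A C U \<ge> 2 / 3) \<longrightarrow>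
            real (num_queries A) \<ge> c * sqrt (real N)"
    by (intro exI[of _ "1 / 60"] conjI) (simp, blast intro: state_prep_query_lower_bound)
qed

end
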